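(* Let $T$ be a perfect tree, $\rho$ a weight on $T$ and $T_0$ a finite subtree of $T$. Let $k\in\omega$ and let $D\subseteq T^k$ be dense open. Then there is a finite subtree $T_1$ of $T$ with $T_0\lhd_\rho T_1$ such that for every $k$-element set $\{\sigma_0,\dots,\sigma_{k-1}\}\subseteq\mathrm{term}(T_0)$ and all $\sigma_0',\dots,\sigma_{k-1}'\in\mathrm{term}(T_1)$ with $\sigma_l\subseteq\sigma_l'$ for all $l<k$, we have $(\sigma_0',\dots,\sigma_{k-1}')\in D$.
   Context: Trees are subsets of $A^{<\omega}$ ($A$ countable) closed under initial segments; perfect means every node has two incomparable extensions; $T_s=\{t\in T:t\subseteq s\text{ or }s\subseteq t\}$. $T$ is viewed as a poset where longer nodes are stronger (extension), $T^k$ carries the product order, and $D\subseteq T^k$ is dense open in this poset. A weight on $T$ is a map $\rho:T\times T\to[T]^{<\omega}$ with $\rho(s,t)\subseteq T_s\setminus T_t$. For a finite tree $R$, $\mathrm{term}(R)$ is its set of terminal nodes. For finite trees, $T_0\sqsubset T_1$ means $T_0\subsetneq T_1$ and every $t\in T_1\setminus T_0$ extends some element of $\mathrm{term}(T_0)$. For finite subtrees $T_0,T_1$ of $T$, $T_0\lhd_\rho T_1$ (also written $T_1\rhd_\rho T_0$) means $T_0\sqsubset T_1$ and for every $\sigma\in\mathrm{term}(T_0)$ there are $N\ge 2$ and an injective sequence $\langle s_i:i<N\rangle$ in $(T_1)_\sigma$ with $s_0=\sigma$, $s_{N-1}\in\mathrm{term}(T_1)$ and $\rho(s_i,s_{i+1})\subseteq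 T_1$ for all $i<N-1$. *)

theory Defs
  imports Main "HOL-Library.Countable" "HOL-Library.Sublist"
begin

text \<open>Nodes of A^{<omega} are finite lists over a countable type; s \<subseteq> t (initial segment)
  is prefix s t.\<close>

definition is_tree :: "'a list set \<Rightarrow> bool" where
  "is_tree T \<longleftrightarrow> T \<noteq> {} \<and> (\<forall>t\<in>T. \<forall>s. prefix s t \<longrightarrow> s \<in> T)"

definition perfect_tree :: "'a list set \<Rightarrow> bool" where
  "perfect_tree T \<longleftrightarrow> is_tree T \<and>
     (\<forall>s\<in>T. \<exists>t\<in>T. \<exists>u\<in>T. prefix s t \<and> prefix s u \<and> \<not> prefix t u \<and> \<not> prefix u t)"

definition subtree_at :: "'a list set \<Rightarrow> 'a list \<Rightarrow> 'a list set" where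
  "subtree_at T s = {t\<in>T. prefix t s \<or> prefix s t}"

definition is_weight :: "'a list set \<Rightarrow> ('a list \<Rightarrow> 'a list \<Rightarrow> 'a list set) \<Rightarrow> bool" where
  "is_weight T \<rho> \<longleftrightarrow> (\<forall>s\<in>T. \<forall>t\<in>T. finite (\<rho> s t) \<and> \<rho> s t \<subseteq> subtree_at T s - subtree_at T t)"

definition finite_subtree :: "'a list set \<Rightarrow> 'a list set \<Rightarrow> bool" where
  "finite_subtree R T \<longleftrightarrow> is_tree R \<and> finite R \<and> R \<subseteq> T"

definition term_nodes :: "'a list set \<Rightarrow> 'a list set" where
  "term_nodes R = {t\<in>R. \<not> (\<exists>u\<in>R. strict_prefix t u)}"

definition sqsub :: "'a list set \<Rightarrow> 'a list set \<Rightarrow> bool" where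
  "sqsub T0 T1 \<longleftrightarrow> T0 \<subset> T1 \<and> (\<forall>t\<in>T1 - T0. \<exists>\<sigma>\<in>term_nodes T0. prefix \<sigma> t)"

definition rho_lhd :: "('a list \<Rightarrow> 'a list \<Rightarrow> 'a list set) \<Rightarrow> 'a list set \<Rightarrow> 'a list set \<Rightarrow> bool" where
  "rho_lhd \<rho> T0 T1 \<longleftrightarrow> sqsub T0 T1 \<and>
     (\<forall>\<sigma>\<in>term_nodes T0. \<exists>ss. length ss \<ge> 2 \<and> distinct ss \<and> set ss \<subseteq> subtree_at T1 \<sigma> \<and>
        ss ! 0 = \<sigma> \<and> ss ! (length ss - 1) \<in> term_nodes T1 \<and>
        (\<forall>i. i + 1 < length ss \<longrightarrow> \<rho> (ss ! i) (ss ! (i + 1)) \<subseteq> T1))"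

text \<open>T^k as lists of length k with entries in T; q is stronger than p (q \<le> p) in the
  product order iff each coordinate of q extends the corresponding one of p.\<close>

definition power_tree :: "'a list set \<Rightarrow> nat \<Rightarrow> 'a list list set" where
  "power_tree T k = {p. length p = k \<and> set p \<subseteq> T}"

definition prod_le :: "'a list list \<Rightarrow> 'a list list \<Rightarrow> bool" where
  "prod_le q p \<longleftrightarrow> length q = length p \<and> (\<forall>i<length p. prefix (p ! i) (q ! i))"

definition dense_open :: "'a list set \<Rightarrow> nat \<Rightarrow> 'a list list set \<Rightarrow> bool" where
  "dense_open T k D \<longleftrightarrow> D \<subseteq> power_tree T k \<and>
     (\<forall>p\<in>power_tree T k. \<exists>q\<in>D. prod_le q p) \<and>
     (\<forall>p\<in>D. \<forall>q\<in>power_tree T k. prod_le q p \<longrightarrow> q \<in> D)"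

end

theory Submission
  imports Defs
begin

(* For every terminal node s of T0 grow a chain s = c_0 s < c_1 s < ... < c_(k+1) s in k+1
   rounds. Round i+1 extends all nodes of level i at once -- the frontier G_i, which contains
   the nodes c_i s, together with the weight nodes rho (c_(i-1) s) (c_i s) of the last edges --
   using density of D once for every injective k-tuple, so that all injective k-tuples from
   the new frontier G_(i+1) lie in D. T1 is the set of prefixes of level k+1.
   A node of the construction extends a frontier node on every level 1..k+1 except the level
   at which it branched off a chain as a weight node. Hence k terminal nodes of T1 above
   distinct terminal nodes of T0 extend, by pigeonhole, an injective tuple from one common
   frontier, and lie in D because D is open. The chains are the rho-paths required by
   T0 <|_rho T1: their weight nodes lie in T1 by construction, and c_(k+1) s stays terminal
   because all other nodes of the construction are incomparable with it. *)

lemma parallel_extensions: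
  assumes "a \<parallel> b" "prefix a x" "prefix b y"
  shows "x \<parallel> y"
  using assms by (auto elim!: prefixE intro: parallel_appendI)

lemma term_nodes_parallel:
  assumes "\<sigma> \<in> term_nodes R" "\<tau> \<in> term_nodes R" "\<sigma> \<noteq> \<tau>"
  shows "\<sigma> \<parallel> \<tau>"
  using assms unfolding term_nodes_def parallel_def strict_prefix_def by auto

lemma term_nodes_prefix_unique:
  assumes "\<sigma> \<in> term_nodes R" "\<tau> \<in> term_nodes R" "prefix \<sigma> w" "prefix \<tau> w"
  shows "\<sigma> = \<tau>"
  using term_nodes_parallel[OF assms(1,2)] prefix_same_cases[OF assms(3,4)] by auto

lemma ex_term_node_above:
  assumes "finite R" "t \<in> R"
  obtains \<sigma> where "\<sigma> \<in> term_nodes R" "prefix t \<sigma>"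
proof -
  let ?U = "{u\<in>R. prefix t u}"
  have U: "finite ?U" "t \<in> ?U" using assms by auto
  have "Max (length ` ?U) \<in> length ` ?U" using U by (intro Max_in) auto
  then obtain u where u: "u \<in> ?U" "length u = Max (length ` ?U)" by auto
  have "\<not> strict_prefix u v" if "v \<in> R" for v
  proof
    assume "strict_prefix u v"
    then have "v \<in> ?U" "length u < length v"
      using u(1) that by (auto intro: prefix_order.trans prefix_length_less simp: strict_prefix_def)
    moreover have "length v \<le> Max (length ` ?U)" using U(1) \<open>v \<in> ?U\<close> by simp
    ultimately show False using u(2) by simp
  qed
  then show thesis using u(1) that unfolding term_nodes_def by blast
qed

lemma perfect_tree_strict_extension:
  assumes "perfect_tree T" "x \<in> T"
  obtains y where "y \<in> T" "strict_prefix x y"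
  using assms unfolding perfect_tree_def strict_prefix_def by blast

lemma strict_prefix_chain:
  assumes "\<forall>i<n. strict_prefix (c i) (c (Suc i))" "i < j" "j \<le> n"
  shows "strict_prefix (c i) (c j)"
  using assms(2,3)
proof (induction j)
  case (Suc j)
  then show ?case
    using assms(1) by (cases "i = j") (auto intro: prefix_order.less_trans)
qed simp

lemma weight_branches_off:
  assumes "is_weight T \<rho>" "s \<in> T" "t \<in> T" "prefix s t" "z \<in> \<rho> s t"
  shows "strict_prefix s z \<and> z \<parallel> t"
proof -
  have "z \<in> subtree_at T s - subtree_at T t" using assms unfolding is_weight_def by blast
  then have "prefix z s \<or> prefix s z" "\<not> prefix z t" "\<not> prefix t z"
    unfolding subtree_at_def by auto
  then show ?thesis using assms(4) unfolding parallel_def strict_prefix_def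
    by (auto intro: prefix_order.trans)
qed

definition tuples_in :: "nat \<Rightarrow> 'b set \<Rightarrow> 'b list set \<Rightarrow> bool" where
  "tuples_in k G D \<longleftrightarrow> (\<forall>p. length p = k \<and> distinct p \<and> set p \<subseteq> G \<longrightarrow> p \<in> D)"

lemma tuples_in_image:
  assumes "\<forall>p. length p = k \<and> distinct p \<and> set p \<subseteq> F \<longrightarrow> map e p \<in> D"
  shows "tuples_in k (e ` F) D"
  unfolding tuples_in_def
proof (intro allI impI)
  fix q assume q: "length q = k \<and> distinct q \<and> set q \<subseteq> e ` F"
  define p where "p = map (inv_into F e) q"
  have "map e p = q" unfolding p_def map_map o_def
    by (rule map_idI) (use q in \<open>auto intro: f_inv_into_f\<close>)
  moreover have "distinct p" unfolding p_def using q
    by (simp add: distinct_map inj_on_inv_into)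
  moreover have "set p \<subseteq> F" unfolding p_def using q by (auto simp: inv_into_into subsetD)
  moreover have "length p = k" unfolding p_def using q by simp
  ultimately show "q \<in> D" using assms by metis
qed

lemma dense_open_upward:
  assumes "dense_open T k D" "p \<in> D" "q \<in> power_tree T k" "prod_le q p"
  shows "q \<in> D"
  using assms unfolding dense_open_def by blast

lemma dense_open_map_extension:
  assumes "dense_open T k D" "map e p \<in> D" "\<forall>x\<in>set p. prefix (e x) (e' x) \<and> e' x \<in> T"
  shows "map e' p \<in> D"
proof (rule dense_open_upward[OF assms(1,2)])
  have "length p = k" using assms(1,2) unfolding dense_open_def power_tree_def by auto
  then show "map e' p \<in> power_tree T k" using assms(3) unfolding power_tree_def by auto
  show "prod_le (map e' p) (map e p)" using assms(3) unfolding prod_le_def by simp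
qed

lemma dense_open_extend_one_tuple:
  assumes dense: "dense_open T k D" and p: "distinct p" "length p = k" "set p \<subseteq> F"
    and e: "\<forall>x\<in>F. e x \<in> T"
  obtains e' where "\<forall>x\<in>F. prefix (e x) (e' x) \<and> e' x \<in> T" "map e' p \<in> D"
proof -
  have "map e p \<in> power_tree T k" using p e unfolding power_tree_def by auto
  then obtain q where q: "q \<in> D" "prod_le q (map e p)"
    using dense unfolding dense_open_def by blast
  have q_len: "length q = length p" and q_T: "set q \<subseteq> T"
    using q dense unfolding dense_open_def power_tree_def prod_le_def by auto
  define e' where "e' x = (case map_of (zip p q) x of Some y \<Rightarrow> y | None \<Rightarrow> e x)" for x
  have e'_nth: "e' (p ! i) = q ! i" if "i < length p" for i
    using map_of_zip_nth[OF q_len[symmetric] p(1)] that q_len unfolding e'_def by simp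
  have "map e' p = q" using e'_nth q_len by (intro nth_equalityI) auto
  moreover have "prefix (e x) (e' x) \<and> e' x \<in> T" if "x \<in> F" for x
  proof (cases "x \<in> set p")
    case True
    then obtain i where "i < length p" "x = p ! i" by (auto simp: in_set_conv_nth)
    then show ?thesis using q(2) q_len q_T e'_nth unfolding prod_le_def by (auto simp: nth_mem subsetD)
  next
    case False
    moreover have "fst ` set (zip p q) = set p" using q_len by (metis map_fst_zip set_map)
    ultimately have "map_of (zip p q) x = None" by (simp add: map_of_eq_None_iff)
    then show ?thesis using e that unfolding e'_def by simp
  qed
  ultimately show thesis using that q(1) by blast
qed

lemma dense_open_extend_tuples:
  assumes dense: "dense_open T k D" and "finite L" "\<forall>p\<in>L. set p \<subseteq> F \<and> length p = k"
    and "F \<subseteq> T"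
  shows "\<exists>e. (\<forall>x\<in>F. prefix x (e x) \<and> e x \<in> T) \<and> (\<forall>p\<in>L. distinct p \<longrightarrow> map e p \<in> D)"
  using assms(2,3)
proof (induction L rule: finite_induct)
  case empty
  show ?case using \<open>F \<subseteq> T\<close> by (intro exI[of _ id]) auto
next
  case (insert p L)
  then obtain e where e: "\<forall>x\<in>F. prefix x (e x) \<and> e x \<in> T"
    and e_L: "\<forall>p\<in>L. distinct p \<longrightarrow> map e p \<in> D" by auto
  have p: "set p \<subseteq> F" "length p = k" using insert.prems by auto
  show ?case
  proof (cases "distinct p")
    case True
    have "\<forall>x\<in>F. e x \<in> T" using e by blast
    then obtain e' where e': "\<forall>x\<in>F. prefix (e x) (e' x) \<and> e' x \<in> T" "map e' p \<in> D"
      using dense_open_extend_one_tuple[OF dense True p(2,1)] by blast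
    have "map e' q \<in> D" if "q \<in> L" "distinct q" for q
    proof (rule dense_open_map_extension[OF dense])
      show "map e q \<in> D" using e_L that by blast
      show "\<forall>x\<in>set q. prefix (e x) (e' x) \<and> e' x \<in> T" using e' that insert.prems by auto
    qed
    moreover have "\<forall>x\<in>F. prefix x (e' x) \<and> e' x \<in> T"
      using e e' by (auto intro: prefix_order.trans)
    ultimately show ?thesis using e'(2) by (intro exI[of _ e']) auto
  next
    case False
    then show ?thesis using e e_L by (intro exI[of _ e]) auto
  qed
qed

lemma dense_open_extend_to_tuples_in:
  assumes "dense_open T k D" "finite F" "F \<subseteq> T"
  obtains e where "\<forall>x\<in>F. prefix x (e x) \<and> e x \<in> T" "tuples_in k (e ` F) D"
proof -
  let ?L = "{p. set p \<subseteq> F \<and> length p = k}"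
  have "finite ?L" using finite_lists_length_eq[OF assms(2)] .
  then obtain e where e: "\<forall>x\<in>F. prefix x (e x) \<and> e x \<in> T"
    and e_L: "\<forall>p\<in>?L. distinct p \<longrightarrow> map e p \<in> D"
    using dense_open_extend_tuples[OF assms(1) \<open>finite ?L\<close> _ assms(3)] by auto
  have "tuples_in k (e ` F) D" by (rule tuples_in_image) (use e_L in simp)
  with e show thesis by (rule that)
qed

lemma perfect_tree_extend_to_tuples_in:
  assumes "perfect_tree T" "dense_open T k D" "finite F" "F \<subseteq> T"
  obtains e where "\<forall>x\<in>F. strict_prefix x (e x) \<and> e x \<in> T" "tuples_in k (e ` F) D"
proof -
  have "\<forall>x\<in>F. \<exists>y. y \<in> T \<and> strict_prefix x y"
    using perfect_tree_strict_extension[OF assms(1)] assms(4) by blast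
  then obtain d where d: "\<forall>x\<in>F. d x \<in> T \<and> strict_prefix x (d x)" by metis
  have "finite (d ` F)" "d ` F \<subseteq> T" using assms(3) d by auto
  then obtain e where e: "\<forall>x\<in>d ` F. prefix x (e x) \<and> e x \<in> T" "tuples_in k (e ` d ` F) D"
    using dense_open_extend_to_tuples_in[OF assms(2)] by blast
  have "\<forall>x\<in>F. strict_prefix x ((e \<circ> d) x) \<and> (e \<circ> d) x \<in> T"
    using d e(1) by (auto intro: prefix_order.less_le_trans)
  moreover have "tuples_in k ((e \<circ> d) ` F) D" using e(2) by (simp add: image_comp)
  ultimately show thesis by (rule that)
qed

definition prefix_closure :: "'a list set \<Rightarrow> 'a list set" where
  "prefix_closure W = {t. \<exists>w\<in>W. prefix t w}"

lemma prefix_closure_subset: "W \<subseteq> prefix_closure W"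
  unfolding prefix_closure_def by auto

lemma finite_subtree_prefix_closure:
  assumes "is_tree T" "W \<subseteq> T" "finite W" "W \<noteq> {}"
  shows "finite_subtree (prefix_closure W) T"
proof -
  have "prefix_closure W = (\<Union>w\<in>W. set (prefixes w))" unfolding prefix_closure_def by auto
  then have "finite (prefix_closure W)" using assms(3) by simp
  moreover have "is_tree (prefix_closure W)"
    using assms(4) unfolding is_tree_def prefix_closure_def by (auto intro: prefix_order.trans)
  moreover have "prefix_closure W \<subseteq> T"
    using assms(1,2) unfolding is_tree_def prefix_closure_def by blast
  ultimately show ?thesis unfolding finite_subtree_def by blast
qed

lemma term_nodes_prefix_closure:
  "term_nodes (prefix_closure W) = {w\<in>W. \<forall>w'\<in>W. \<not> strict_prefix w w'}"
  unfolding term_nodes_def prefix_closure_def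
  by (auto intro: prefix_order.less_le_trans simp: strict_prefix_def)

lemma sqsub_prefix_closure:
  assumes "is_tree T0" "T0 \<subseteq> prefix_closure W" "\<not> W \<subseteq> T0"
    and "\<forall>w\<in>W. \<exists>\<tau>\<in>term_nodes T0. prefix \<tau> w"
  shows "sqsub T0 (prefix_closure W)"
  unfolding sqsub_def
proof (intro conjI ballI)
  show "T0 \<subset> prefix_closure W" using assms(2,3) prefix_closure_subset by blast
next
  fix t assume "t \<in> prefix_closure W - T0"
  then obtain w \<tau> where t: "prefix t w" "t \<notin> T0" and \<tau>: "\<tau> \<in> term_nodes T0" "prefix \<tau> w"
    using assms(4) unfolding prefix_closure_def by blast
  have "\<not> prefix t \<tau>" using t(2) \<tau>(1) assms(1) unfolding is_tree_def term_nodes_def by blast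
  then show "\<exists>\<sigma>\<in>term_nodes T0. prefix \<sigma> t" using prefix_same_cases[OF t(1) \<tau>(2)] \<tau>(1) by blast
qed

lemma rho_path_of_chain:
  assumes "0 < n" "\<forall>i<n. strict_prefix (c i) (c (Suc i))" "\<forall>i\<le>n. c i \<in> R"
    and "c n \<in> term_nodes R" "\<forall>i<n. \<rho> (c i) (c (Suc i)) \<subseteq> R"
  shows "\<exists>ss. length ss \<ge> 2 \<and> distinct ss \<and> set ss \<subseteq> subtree_at R (c 0) \<and>
    ss ! 0 = c 0 \<and> ss ! (length ss - 1) \<in> term_nodes R \<and>
    (\<forall>i. i + 1 < length ss \<longrightarrow> \<rho> (ss ! i) (ss ! (i + 1)) \<subseteq> R)"
proof (intro exI conjI)
  let ?ss = "map c [0..<Suc n]"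
  have mono: "strict_prefix (c i) (c j)" if "i < j" "j \<le> n" for i j
    using strict_prefix_chain[OF assms(2) that] .
  have "inj_on c {0..<Suc n}"
    by (rule inj_onI) (metis atLeastLessThan_iff less_Suc_eq_le mono nat_neq_iff prefix_order.less_imp_neq)
  then show "distinct ?ss" by (simp add: distinct_map del: upt_Suc)
  have "prefix (c 0) (c j)" if "j \<le> n" for j
    using mono[of 0 j] that by (cases "j = 0") (auto simp: strict_prefix_def)
  then show "set ?ss \<subseteq> subtree_at R (c 0)"
    using assms(3) unfolding subtree_at_def by (auto simp del: upt_Suc)
  show "?ss ! (length ?ss - 1) \<in> term_nodes R" using assms(4) by (simp del: upt_Suc)
  show "\<forall>i. i + 1 < length ?ss \<longrightarrow> \<rho> (?ss ! i) (?ss ! (i + 1)) \<subseteq> R"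
    using assms(5) by (simp del: upt_Suc add: nth_upt)
qed (use assms(1) in \<open>simp_all del: upt_Suc\<close>)

lemma dense_open_mem_if_levels_cover:
  assumes dense: "dense_open T k D"
    and I: "finite I" "k < card I"
    and G: "\<forall>i\<in>I. tuples_in k (G i) D" "\<forall>i\<in>I. \<forall>v\<in>G i. \<exists>\<tau>\<in>term_nodes R. prefix \<tau> v"
    and \<sigma>s: "length \<sigma>s = k" "distinct \<sigma>s" "set \<sigma>s \<subseteq> term_nodes R"
    and \<sigma>s': "length \<sigma>s' = k" "set \<sigma>s' \<subseteq> T" "\<forall>l<k. prefix (\<sigma>s ! l) (\<sigma>s' ! l)"
    and cover: "\<forall>l<k. \<exists>m. \<forall>i\<in>I - {m}. \<exists>v\<in>G i. prefix v (\<sigma>s' ! l)"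
  shows "\<sigma>s' \<in> D"
proof -
  obtain m where m: "\<forall>l<k. \<forall>i\<in>I - {m l}. \<exists>v\<in>G i. prefix v (\<sigma>s' ! l)"
    using cover by metis
  (* pigeonhole: the k coordinates miss at most k of the more than k levels *)
  have "card (m ` {..<k}) < card I" using card_image_le[of "{..<k}" m] I(2) by simp
  then have "\<not> I \<subseteq> m ` {..<k}" using card_mono[of "m ` {..<k}" I] by auto
  then obtain i where i: "i \<in> I" "i \<notin> m ` {..<k}" by blast
  then have "\<forall>l<k. \<exists>v\<in>G i. prefix v (\<sigma>s' ! l)" using m by blast
  then obtain v where v: "\<forall>l<k. v l \<in> G i \<and> prefix (v l) (\<sigma>s' ! l)" by metis
  let ?vs = "map v [0..<k]"
  have "inj_on v {..<k}"
  proof (rule inj_onI)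
    fix a b assume ab: "a \<in> {..<k}" "b \<in> {..<k}" "v a = v b"
    obtain \<tau> where \<tau>: "\<tau> \<in> term_nodes R" "prefix \<tau> (v a)" using G(2) i(1) v ab(1) by blast
    have "\<sigma>s ! l = \<tau>" if "l \<in> {a, b}" for l
    proof (rule term_nodes_prefix_unique[OF _ \<tau>(1)])
      show "\<sigma>s ! l \<in> term_nodes R" using that ab \<sigma>s(1,3) by (auto intro: nth_mem)
      show "prefix (\<sigma>s ! l) (\<sigma>s' ! l)" using that ab \<sigma>s'(3) by auto
      show "prefix \<tau> (\<sigma>s' ! l)" using that ab v \<tau>(2) by (auto intro: prefix_order.trans)
    qed
    then have "\<sigma>s ! a = \<sigma>s ! b" by simp
    then show "a = b" using ab(1,2) \<sigma>s(1,2) by (simp add: nth_eq_iff_index_eq)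
  qed
  then have "distinct ?vs" by (simp add: distinct_map atLeast0LessThan)
  moreover have "set ?vs \<subseteq> G i" using v by auto
  ultimately have "?vs \<in> D" using G(1) i(1) unfolding tuples_in_def by simp
  moreover have "\<sigma>s' \<in> power_tree T k" using \<sigma>s' unfolding power_tree_def by simp
  moreover have "prod_le \<sigma>s' ?vs" using \<sigma>s'(1) v unfolding prod_le_def by simp
  ultimately show ?thesis by (rule dense_open_upward[OF dense])
qed

locale weighted_fusion =
  fixes T T0 :: "'a list set" and \<rho> :: "'a list \<Rightarrow> 'a list \<Rightarrow> 'a list set"
    and k :: nat and D :: "'a list list set"
  assumes perfect: "perfect_tree T" and weight: "is_weight T \<rho>"
    and T0: "finite_subtree T0 T" and dense: "dense_open T k D"
begin

abbreviation leaves :: "'a list set" where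
  "leaves \<equiv> term_nodes T0"

lemma leaves: "finite leaves" "leaves \<subseteq> T" "leaves \<noteq> {}"
proof -
  have T0': "finite T0" "T0 \<subseteq> T" "is_tree T0" using T0 unfolding finite_subtree_def by auto
  have "leaves \<subseteq> T0" unfolding term_nodes_def by auto
  then show "finite leaves" "leaves \<subseteq> T" using T0' by (auto intro: finite_subset)
  obtain t where "t \<in> T0" using T0'(3) unfolding is_tree_def by auto
  then obtain \<sigma> where "\<sigma> \<in> leaves" using ex_term_node_above[OF T0'(1)] by metis
  then show "leaves \<noteq> {}" by blast
qed

definition grow :: "'a list set \<Rightarrow> 'a list \<Rightarrow> 'a list" where
  "grow F = (SOME e. (\<forall>x\<in>F. strict_prefix x (e x) \<and> e x \<in> T) \<and> tuples_in k (e ` F) D)"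

lemma grow:
  assumes "finite F" "F \<subseteq> T"
  shows "\<forall>x\<in>F. strict_prefix x (grow F x) \<and> grow F x \<in> T" "tuples_in k (grow F ` F) D"
proof -
  have "\<exists>e. (\<forall>x\<in>F. strict_prefix x (e x) \<and> e x \<in> T) \<and> tuples_in k (e ` F) D"
    using perfect_tree_extend_to_tuples_in[OF perfect dense assms] by metis
  then have "(\<forall>x\<in>F. strict_prefix x (grow F x) \<and> grow F x \<in> T) \<and> tuples_in k (grow F ` F) D"
    unfolding grow_def by (rule someI_ex)
  then show "\<forall>x\<in>F. strict_prefix x (grow F x) \<and> grow F x \<in> T" "tuples_in k (grow F ` F) D"
    by auto
qed

(* stage i = (c_i, G_i, Z_i): c_i s is the i-th node of the rho-path from the leaf s, G_i is the
   i-th frontier and Z_i the set of weight nodes of the edges from c_(i-1) s to c_i s. *)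
primrec stage :: "nat \<Rightarrow> ('a list \<Rightarrow> 'a list) \<times> 'a list set \<times> 'a list set" where
  "stage 0 = (id, leaves, {})"
| "stage (Suc i) = (case stage i of (c, G, Z) \<Rightarrow>
     let e = grow (G \<union> Z) in (e \<circ> c, e ` (G \<union> Z), \<Union>\<sigma>\<in>leaves. \<rho> (c \<sigma>) (e (c \<sigma>))))"

definition chain :: "nat \<Rightarrow> 'a list \<Rightarrow> 'a list" where
  "chain i = fst (stage i)"

definition frontier :: "nat \<Rightarrow> 'a list set" where
  "frontier i = fst (snd (stage i))"

definition weights :: "nat \<Rightarrow> 'a list set" where
  "weights i = snd (snd (stage i))"

abbreviation level :: "nat \<Rightarrow> 'a list set" where
  "level i \<equiv> frontier i \<union> weights i"

abbreviation extend :: "nat \<Rightarrow> 'a list \<Rightarrow> 'a list" where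
  "extend i \<equiv> grow (level i)"

lemma stage_0: "chain 0 = id" "frontier 0 = leaves" "weights 0 = {}"
  unfolding chain_def frontier_def weights_def by simp_all

lemma stage_Suc:
  "chain (Suc i) = extend i \<circ> chain i"
  "frontier (Suc i) = extend i ` level i"
  "weights (Suc i) = (\<Union>\<sigma>\<in>leaves. \<rho> (chain i \<sigma>) (chain (Suc i) \<sigma>))"
  unfolding chain_def frontier_def weights_def by (simp_all split: prod.split add: Let_def)


lemma chain_in_frontier: "\<sigma> \<in> leaves \<Longrightarrow> chain i \<sigma> \<in> frontier i"
  by (induction i) (auto simp: stage_0 stage_Suc)

lemma level_finite_subset: "finite (level i) \<and> level i \<subseteq> T"
proof (induction i)
  case 0
  show ?case using leaves by (simp add: stage_0)
next
  case (Suc i)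
  then have ext: "\<forall>x\<in>level i. strict_prefix x (extend i x) \<and> extend i x \<in> T"
    using grow(1) by blast
  have "finite (\<rho> (chain i \<sigma>) (chain (Suc i) \<sigma>)) \<and> \<rho> (chain i \<sigma>) (chain (Suc i) \<sigma>) \<subseteq> T"
    if "\<sigma> \<in> leaves" for \<sigma>
  proof -
    have "chain i \<sigma> \<in> T" "chain (Suc i) \<sigma> \<in> T"
      using chain_in_frontier[OF that, of i] Suc ext by (auto simp: stage_Suc)
    then show ?thesis using weight unfolding is_weight_def subtree_at_def by blast
  qed
  then show ?case using Suc ext leaves(1) by (auto simp: stage_Suc)
qed

lemma extend:
  assumes "x \<in> level i"
  shows "strict_prefix x (extend i x) \<and> extend i x \<in> T"
proof -
  have "finite (level i)" "level i \<subseteq> T" using level_finite_subset by auto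
  from grow(1)[OF this] show ?thesis using assms by blast
qed

lemma frontier_tuples_in: "tuples_in k (frontier (Suc i)) D"
proof -
  have "finite (level i)" "level i \<subseteq> T" using level_finite_subset by auto
  from grow(2)[OF this] show ?thesis by (simp add: stage_Suc)
qed

lemma chain_strict_mono:
  assumes "\<sigma> \<in> leaves" "i < j"
  shows "strict_prefix (chain i \<sigma>) (chain j \<sigma>)"
proof -
  have "\<forall>i<j. strict_prefix (chain i \<sigma>) (chain (Suc i) \<sigma>)"
    using extend chain_in_frontier[OF assms(1)] by (simp add: stage_Suc)
  then show ?thesis using strict_prefix_chain[of j "\<lambda>i. chain i \<sigma>"] assms(2) by blast
qed

lemma chain_mono: "\<sigma> \<in> leaves \<Longrightarrow> i \<le> j \<Longrightarrow> prefix (chain i \<sigma>) (chain j \<sigma>)"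
  using chain_strict_mono[of \<sigma> i j] by (cases "i = j") auto

lemma leaf_prefix_chain: "\<sigma> \<in> leaves \<Longrightarrow> prefix \<sigma> (chain i \<sigma>)"
  using chain_mono[of \<sigma> 0 i] by (simp add: stage_0)

lemma weights_SucE:
  assumes "z \<in> weights (Suc i)"
  obtains \<sigma> where "\<sigma> \<in> leaves" "strict_prefix (chain i \<sigma>) z" "z \<parallel> chain (Suc i) \<sigma>"
proof -
  obtain \<sigma> where \<sigma>: "\<sigma> \<in> leaves" "z \<in> \<rho> (chain i \<sigma>) (chain (Suc i) \<sigma>)"
    using assms by (auto simp: stage_Suc)
  have "chain j \<sigma> \<in> T" for j using chain_in_frontier[OF \<sigma>(1)] level_finite_subset by blast
  then show thesis
    using weight_branches_off[OF weight _ _ chain_mono[OF \<sigma>(1)] \<sigma>(2)] that \<sigma>(1) by auto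
qed

lemma weights_parallel_chain:
  assumes "z \<in> weights i" "\<sigma> \<in> leaves"
  shows "z \<parallel> chain i \<sigma>"
proof (cases i)
  case 0
  then show ?thesis using assms(1) by (simp add: stage_0)
next
  case (Suc i')
  then obtain \<tau> where \<tau>: "\<tau> \<in> leaves" "strict_prefix (chain i' \<tau>) z" "z \<parallel> chain i \<tau>"
    using assms(1) weights_SucE by metis
  show ?thesis
  proof (cases "\<tau> = \<sigma>")
    case False
    have "prefix \<tau> z" using leaf_prefix_chain[OF \<tau>(1), of i'] \<tau>(2) by (auto simp: strict_prefix_def)
    then show ?thesis using parallel_extensions[OF term_nodes_parallel[OF \<tau>(1) assms(2) False]]
      leaf_prefix_chain[OF assms(2)] by blast
  qed (use \<tau> in simp)
qed

lemma frontier_parallel_chain: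
  assumes "v \<in> frontier i" "\<sigma> \<in> leaves"
  shows "v = chain i \<sigma> \<or> v \<parallel> chain i \<sigma>"
  using assms(1)
proof (induction i arbitrary: v)
  case 0
  then show ?case using term_nodes_parallel assms(2) by (auto simp: stage_0)
next
  case (Suc i)
  then obtain x where x: "x \<in> level i" "v = extend i x" by (auto simp: stage_Suc)
  have "x = chain i \<sigma> \<or> x \<parallel> chain i \<sigma>" using Suc.IH weights_parallel_chain x(1) assms(2) by blast
  moreover have "prefix (chain i \<sigma>) (extend i (chain i \<sigma>))"
    using extend chain_in_frontier[OF assms(2)] by (auto simp: strict_prefix_def)
  moreover have "prefix x (extend i x)" using extend[OF x(1)] by (auto simp: strict_prefix_def)
  ultimately show ?case using x(2) parallel_extensions by (auto simp: stage_Suc)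
qed

lemma level_above_leaf: "v \<in> level i \<Longrightarrow> \<exists>\<tau>\<in>leaves. prefix \<tau> v"
proof (induction i arbitrary: v)
  case 0
  then show ?case by (auto simp: stage_0)
next
  case (Suc i)
  show ?case
  proof (cases "v \<in> frontier (Suc i)")
    case True
    then obtain x where x: "x \<in> level i" "v = extend i x" by (auto simp: stage_Suc)
    then show ?thesis using Suc.IH extend[OF x(1)] by (meson prefix_order.trans strict_prefix_def)
  next
    case False
    then obtain \<sigma> where "\<sigma> \<in> leaves" "strict_prefix (chain i \<sigma>) v"
      using Suc.prems weights_SucE by blast
    then show ?thesis using leaf_prefix_chain by (meson prefix_order.trans strict_prefix_def)
  qed
qed

(* The level a node may miss is the one where it branched off a chain as a weight node. *)
lemma level_covers: "w \<in> level i \<Longrightarrow> \<exists>m. \<forall>j\<in>{1..i} - {m}. \<exists>v\<in>frontier j. prefix v w"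
proof (induction i arbitrary: w)
  case (Suc i)
  show ?case
  proof (cases "w \<in> frontier (Suc i)")
    case True
    then obtain x where x: "x \<in> level i" "w = extend i x" by (auto simp: stage_Suc)
    then have "prefix x w" using extend by (auto simp: strict_prefix_def)
    obtain m where m: "\<forall>j\<in>{1..i} - {m}. \<exists>v\<in>frontier j. prefix v x" using Suc.IH x(1) by blast
    have "\<exists>v\<in>frontier j. prefix v w" if j: "j \<in> {1..Suc i} - {m}" for j
    proof (cases "j = Suc i")
      case False
      then have "j \<in> {1..i} - {m}" using j by auto
      then obtain v where "v \<in> frontier j" "prefix v x" using m by blast
      then show ?thesis using \<open>prefix x w\<close> by (auto intro: prefix_order.trans)
    qed (use True in auto)
    then show ?thesis by blast
  next
    case False
    then obtain \<sigma> where \<sigma>: "\<sigma> \<in> leaves" "strict_prefix (chain i \<sigma>) w"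
      using Suc.prems weights_SucE by blast
    have "prefix (chain j \<sigma>) w" if "j \<le> i" for j
      using chain_mono[OF \<sigma>(1) that] \<sigma>(2) by (auto simp: strict_prefix_def intro: prefix_order.trans)
    then have "\<forall>j\<in>{1..Suc i} - {Suc i}. \<exists>v\<in>frontier j. prefix v w"
      using chain_in_frontier[OF \<sigma>(1)] by (metis Diff_iff atLeastAtMost_iff le_Suc_eq singletonI)
    then show ?thesis by blast
  qed
qed simp

lemma weights_below_frontier: "j < i \<Longrightarrow> z \<in> weights j \<Longrightarrow> \<exists>v\<in>frontier i. prefix z v"
proof (induction i)
  case (Suc i)
  then obtain x where "x \<in> level i" "prefix z x"
    by (cases "j = i") auto
  then show ?case using extend[of x i] by (auto simp: stage_Suc strict_prefix_def intro: prefix_order.trans)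
qed simp


lemma T0_subset_closure: "T0 \<subseteq> prefix_closure (level n)"
proof
  fix t assume "t \<in> T0"
  moreover have "finite T0" using T0 unfolding finite_subtree_def by blast
  ultimately obtain \<sigma> where \<sigma>: "\<sigma> \<in> leaves" "prefix t \<sigma>" using ex_term_node_above by metis
  then have "prefix t (chain n \<sigma>)" using leaf_prefix_chain by (blast intro: prefix_order.trans)
  then show "t \<in> prefix_closure (level n)"
    using chain_in_frontier[OF \<sigma>(1)] unfolding prefix_closure_def by blast
qed

lemma chain_term_node: "\<sigma> \<in> leaves \<Longrightarrow> chain n \<sigma> \<in> term_nodes (prefix_closure (level n))"
  unfolding term_nodes_prefix_closure strict_prefix_def
  using chain_in_frontier frontier_parallel_chain weights_parallel_chain
  by (fastforce dest: parallelD2)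

lemma finite_subtree_closure: "finite_subtree (prefix_closure (level n)) T"
proof (rule finite_subtree_prefix_closure)
  show "is_tree T" using perfect unfolding perfect_tree_def by blast
  show "level n \<noteq> {}" using chain_in_frontier leaves(3) by blast
qed (use level_finite_subset in auto)

lemma rho_lhd_closure:
  assumes "0 < n"
  shows "rho_lhd \<rho> T0 (prefix_closure (level n))"
  unfolding rho_lhd_def
proof (intro conjI ballI)
  obtain \<sigma> where \<sigma>: "\<sigma> \<in> leaves" using leaves(3) by blast
  then have "chain n \<sigma> \<notin> T0"
    using chain_strict_mono[OF \<sigma> assms] unfolding term_nodes_def by (auto simp: stage_0)
  then have "\<not> level n \<subseteq> T0" using chain_in_frontier[OF \<sigma>] by blast
  moreover have "is_tree T0" using T0 unfolding finite_subtree_def by blast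
  ultimately show "sqsub T0 (prefix_closure (level n))"
    using sqsub_prefix_closure T0_subset_closure level_above_leaf by blast
next
  fix \<sigma> assume \<sigma>: "\<sigma> \<in> leaves"
  let ?R = "prefix_closure (level n)"
  have "\<rho> (chain i \<sigma>) (chain (Suc i) \<sigma>) \<subseteq> ?R" if "i < n" for i
  proof
    fix z assume "z \<in> \<rho> (chain i \<sigma>) (chain (Suc i) \<sigma>)"
    then have z: "z \<in> weights (Suc i)" using \<sigma> by (auto simp: stage_Suc)
    show "z \<in> ?R"
    proof (cases "Suc i = n")
      case False
      then show ?thesis using weights_below_frontier[OF _ z, of n] that
        unfolding prefix_closure_def by auto
    qed (use z prefix_closure_subset in blast)
  qed
  moreover have "chain i \<sigma> \<in> ?R" if "i \<le> n" for i
    using chain_mono[OF \<sigma> that] chain_in_frontier[OF \<sigma>] unfolding prefix_closure_def by blast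
  ultimately show "\<exists>ss. 2 \<le> length ss \<and> distinct ss \<and> set ss \<subseteq> subtree_at ?R \<sigma> \<and>
      ss ! 0 = \<sigma> \<and> ss ! (length ss - 1) \<in> term_nodes ?R \<and>
      (\<forall>i. i + 1 < length ss \<longrightarrow> \<rho> (ss ! i) (ss ! (i + 1)) \<subseteq> ?R)"
    using rho_path_of_chain[OF assms, of "\<lambda>i. chain i \<sigma>"] chain_strict_mono[OF \<sigma>]
      chain_term_node[OF \<sigma>] by (simp add: stage_0)
qed

lemma closure_term_tuples_in_D:
  assumes "length \<sigma>s = k" "distinct \<sigma>s" "set \<sigma>s \<subseteq> leaves"
    and "length \<sigma>s' = k" "set \<sigma>s' \<subseteq> term_nodes (prefix_closure (level (Suc k)))"
    and "\<forall>l<k. prefix (\<sigma>s ! l) (\<sigma>s' ! l)"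
  shows "\<sigma>s' \<in> D"
proof (rule dense_open_mem_if_levels_cover[OF dense, where I = "{1..Suc k}" and G = frontier])
  have \<sigma>s'_level: "set \<sigma>s' \<subseteq> level (Suc k)" using assms(5) by (auto simp: term_nodes_prefix_closure)
  then show "set \<sigma>s' \<subseteq> T" using level_finite_subset by blast
  show "\<forall>l<k. \<exists>m. \<forall>i\<in>{1..Suc k} - {m}. \<exists>v\<in>frontier i. prefix v (\<sigma>s' ! l)"
    using level_covers \<sigma>s'_level assms(4) by (auto intro: nth_mem)
  show "\<forall>i\<in>{1..Suc k}. tuples_in k (frontier i) D"
  proof
    fix i :: nat assume "i \<in> {1..Suc k}"
    then show "tuples_in k (frontier i) D" using frontier_tuples_in by (cases i) auto
  qed
  show "\<forall>i\<in>{1..Suc k}. \<forall>v\<in>frontier i. \<exists>\<tau>\<in>leaves. prefix \<tau> v"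
    using level_above_leaf by blast
qed (use assms in simp_all)

end

theorem lemma4p15:
  fixes T T0 :: "('a::countable) list set"
    and \<rho> :: "'a list \<Rightarrow> 'a list \<Rightarrow> 'a list set"
    and k :: nat and D :: "'a list list set"
  assumes "perfect_tree T"
    and "is_weight T \<rho>"
    and "finite_subtree T0 T"
    and "dense_open T k D"
  shows "\<exists>T1. finite_subtree T1 T \<and> rho_lhd \<rho> T0 T1 \<and>
     (\<forall>\<sigma>s \<sigma>s'. length \<sigma>s = k \<and> distinct \<sigma>s \<and> set \<sigma>s \<subseteq> term_nodes T0 \<and>
        length \<sigma>s' = k \<and> set \<sigma>s' \<subseteq> term_nodes T1 \<and>
        (\<forall>l<k. prefix (\<sigma>s ! l) (\<sigma>s' ! l)) \<longrightarrow> \<sigma>s' \<in> D)"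
proof -
  interpret weighted_fusion T T0 \<rho> k D using assms by unfold_locales
  let ?T1 = "prefix_closure (level (Suc k))"
  have "finite_subtree ?T1 T" by (rule finite_subtree_closure)
  moreover have "rho_lhd \<rho> T0 ?T1" by (rule rho_lhd_closure) simp
  ultimately show ?thesis using closure_term_tuples_in_D by blast
qed

end
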